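(* Let $t\in\mathbb{C}^\times$ with $t\neq q^{-2k}$ for all integers $k\ge0$. Then the map $T\mapsto\big(T(1),T(Z),\dots,T(Z^{n-1})\big)$ is a linear isomorphism from the space of $g_t$-twisted traces on $\mathcal{A}_+$ onto $\mathbb{C}^n$.
   Context: Let $q\in\mathbb{C}$ with $0<|q|<1$, $P\in\mathbb{C}[z]$ of degree $n\ge1$. $\mathcal{A}_P$ is generated by $u,v,Z,Z^{-1}$ with relations $ZZ^{-1}=Z^{-1}Z=1$, $ZuZ^{-1}=q^2u$, $ZvZ^{-1}=q^{-2}v$, $uv=P(q^{-1}Z)$, $vu=P(qZ)$, and $\mathcal{A}_+$ is its subalgebra generated by $u,v,Z$. $g_t$ is the automorphism $u\mapsto tu$, $v\mapsto t^{-1}v$, $Z\mapsto Z$ (it preserves $\mathcal{A}_+$). A $g_t$-twisted trace on $\mathcal{A}_+$ is a linear $T\colon\mathcal{A}_+\to\mathbb{C}$ with $T(ab)=T(b\,g_t(a))$ for all $a,b\in\mathcal{A}_+$. *)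

theory Defs
  imports Complex_Main "HOL-Computational_Algebra.Polynomial"
begin

text \<open>Free associative algebra on the letters u, v, Z, Z^-1 (ZI), with elements
  represented as finitely supported coefficient functions on words.\<close>

datatype gen = U | V | Z | ZI

type_synonym word = "gen list"
type_synonym elem = "word \<Rightarrow> complex"

definition fin_supp :: "elem \<Rightarrow> bool" where
  "fin_supp a \<longleftrightarrow> finite {w. a w \<noteq> 0}"

definition mono :: "word \<Rightarrow> elem" where
  "mono w = (\<lambda>w'. if w' = w then 1 else 0)"

definition eadd :: "elem \<Rightarrow> elem \<Rightarrow> elem" where
  "eadd a b = (\<lambda>w. a w + b w)"

definition esub :: "elem \<Rightarrow> elem \<Rightarrow> elem" where
  "esub a b = (\<lambda>w. a w - b w)"

definition scal :: "complex \<Rightarrow> elem \<Rightarrow> elem" where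
  "scal c a = (\<lambda>w. c * a w)"

definition fmul :: "elem \<Rightarrow> elem \<Rightarrow> elem" where
  "fmul a b = (\<lambda>w. \<Sum>k\<in>{0..length w}. a (take k w) * b (drop k w))"

text \<open>The element P(c Z) of the free algebra.\<close>
definition Pat :: "complex poly \<Rightarrow> complex \<Rightarrow> elem" where
  "Pat P c = (\<lambda>w. if (\<forall>x\<in>set w. x = Z) then coeff P (length w) * c ^ length w else 0)"

text \<open>Defining relations of A_P (as elements r with r = 0 in A_P).\<close>
definition rels :: "complex \<Rightarrow> complex poly \<Rightarrow> elem set" where
  "rels q P = { esub (mono [Z, ZI]) (mono []), esub (mono [ZI, Z]) (mono []),
                esub (mono [Z, U, ZI]) (scal (q^2) (mono [U])),
                esub (mono [Z, V, ZI]) (scal (inverse (q^2)) (mono [V])),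
                esub (mono [U, V]) (Pat P (inverse q)),
                esub (mono [V, U]) (Pat P q) }"

text \<open>Two-sided ideal of the free algebra generated by the relations; A_P is the quotient.\<close>
inductive_set rel_ideal :: "complex \<Rightarrow> complex poly \<Rightarrow> elem set" for q P where
  gen: "r \<in> rels q P \<Longrightarrow> r \<in> rel_ideal q P"
| add: "a \<in> rel_ideal q P \<Longrightarrow> b \<in> rel_ideal q P \<Longrightarrow> eadd a b \<in> rel_ideal q P"
| scal: "a \<in> rel_ideal q P \<Longrightarrow> scal c a \<in> rel_ideal q P"
| left: "a \<in> rel_ideal q P \<Longrightarrow> fmul (mono x) a \<in> rel_ideal q P"
| right: "a \<in> rel_ideal q P \<Longrightarrow> fmul a (mono x) \<in> rel_ideal q P"

text \<open>Elements of the free algebra in the letters u, v, Z only; their images in A_P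
  form the subalgebra A_+.  Hence A_+ = F_+ / (F_+ \<inter> rel_ideal).\<close>
definition Fplus :: "elem \<Rightarrow> bool" where
  "Fplus a \<longleftrightarrow> fin_supp a \<and> (\<forall>w. a w \<noteq> 0 \<longrightarrow> ZI \<notin> set w)"

definition wdeg :: "word \<Rightarrow> int" where
  "wdeg w = int (length (filter (\<lambda>x. x = U) w)) - int (length (filter (\<lambda>x. x = V) w))"

text \<open>The automorphism g_t: u \<mapsto> t u, v \<mapsto> t^-1 v, Z \<mapsto> Z (lifted to the free algebra).\<close>
definition gt :: "complex \<Rightarrow> elem \<Rightarrow> elem" where
  "gt t a = (\<lambda>w. t powi wdeg w * a w)"

definition ext :: "(word \<Rightarrow> complex) \<Rightarrow> elem \<Rightarrow> complex" where
  "ext f a = (\<Sum>w\<in>{w. a w \<noteq> 0}. a w * f w)"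

text \<open>g_t-twisted traces on A_+, encoded by their values on (Z^-1-free) words: a linear
  functional on F_+ that vanishes on F_+ \<inter> rel_ideal (i.e. descends to A_+) and satisfies
  T(ab) = T(b g_t(a)).  Values on words containing Z^-1 are normalised to 0.\<close>
definition twisted_traces :: "complex \<Rightarrow> complex poly \<Rightarrow> complex \<Rightarrow> (word \<Rightarrow> complex) set" where
  "twisted_traces q P t = {f.
     (\<forall>w. ZI \<in> set w \<longrightarrow> f w = 0) \<and>
     (\<forall>a. Fplus a \<and> a \<in> rel_ideal q P \<longrightarrow> ext f a = 0) \<and>
     (\<forall>a b. Fplus a \<and> Fplus b \<longrightarrow> ext f (fmul a b) = ext f (fmul b (gt t a)))}"

end

theory Submission
  imports Defs
begin

(*
  Modulo the relations, every Z^-1-free word is a combination of the monomials u^k Z^m and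
  v^k Z^m, with coefficients that do not depend on the functional.  For a g_t-twisted trace T,
  moving one letter u (or v) cyclically around u^k Z^m gives
  T(u^k Z^m) = (t q^(2m))^(+-1) T(u^k Z^m), so T vanishes off the powers of Z; and
  T(u v Z^j) = T(v Z^j g_t(u)) yields the recurrence
  sum_i p_i (q^-i - t q^(2j+i)) T(Z^(j+i)) = 0, whose leading coefficient is nonzero exactly
  because t <> q^(-2k).  Hence T is determined by T(1), ..., T(Z^(n-1)).
  Conversely, solve the recurrence for arbitrary initial values and extend through the normal
  form expansion.  The resulting functional descends to A_+ because the expansion is realised
  by a representation of A_P on functions on Z x Z, and twisted cyclicity only has to be
  checked for a single letter against a normal form.
*)

abbreviation supp :: "elem \<Rightarrow> word set" where
  "supp a \<equiv> {w. a w \<noteq> 0}"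

lemma ext_eq_sum_superset:
  assumes "finite S" "supp a \<subseteq> S"
  shows "ext f a = (\<Sum>w\<in>S. a w * f w)"
  unfolding ext_def by (rule sum.mono_neutral_left) (use assms in auto)

lemma fin_supp_eadd: "fin_supp a \<Longrightarrow> fin_supp b \<Longrightarrow> fin_supp (eadd a b)"
  unfolding fin_supp_def eadd_def by (rule finite_subset[of _ "supp a \<union> supp b"]) auto

lemma fin_supp_esub: "fin_supp a \<Longrightarrow> fin_supp b \<Longrightarrow> fin_supp (esub a b)"
  unfolding fin_supp_def esub_def by (rule finite_subset[of _ "supp a \<union> supp b"]) auto

lemma fin_supp_scal: "fin_supp a \<Longrightarrow> fin_supp (scal c a)"
  unfolding fin_supp_def scal_def by (rule finite_subset[of _ "supp a"]) auto

lemma fin_supp_mono: "fin_supp (mono w)"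
  unfolding fin_supp_def mono_def by (rule finite_subset[of _ "{w}"]) auto

lemma ext_eadd:
  assumes "fin_supp a" "fin_supp b"
  shows "ext f (eadd a b) = ext f a + ext f b"
proof -
  let ?S = "supp a \<union> supp b"
  have S: "finite ?S" using assms by (simp add: fin_supp_def)
  have "ext f (eadd a b) = (\<Sum>w\<in>?S. eadd a b w * f w)"
    by (rule ext_eq_sum_superset[OF S]) (auto simp: eadd_def)
  also have "\<dots> = (\<Sum>w\<in>?S. a w * f w) + (\<Sum>w\<in>?S. b w * f w)"
    by (simp add: eadd_def distrib_right sum.distrib)
  finally show ?thesis
    using ext_eq_sum_superset[OF S, of a f] ext_eq_sum_superset[OF S, of b f] by auto
qed

lemma ext_esub:
  assumes "fin_supp a" "fin_supp b"
  shows "ext f (esub a b) = ext f a - ext f b"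
proof -
  let ?S = "supp a \<union> supp b"
  have S: "finite ?S" using assms by (simp add: fin_supp_def)
  have "ext f (esub a b) = (\<Sum>w\<in>?S. esub a b w * f w)"
    by (rule ext_eq_sum_superset[OF S]) (auto simp: esub_def)
  also have "\<dots> = (\<Sum>w\<in>?S. a w * f w) - (\<Sum>w\<in>?S. b w * f w)"
    by (simp add: esub_def left_diff_distrib sum_subtractf)
  finally show ?thesis
    using ext_eq_sum_superset[OF S, of a f] ext_eq_sum_superset[OF S, of b f] by auto
qed

lemma ext_scal:
  assumes "fin_supp a"
  shows "ext f (scal c a) = c * ext f a"
proof -
  have S: "finite (supp a)" using assms by (simp add: fin_supp_def)
  have "ext f (scal c a) = (\<Sum>w\<in>supp a. scal c a w * f w)"
    by (rule ext_eq_sum_superset[OF S]) (auto simp: scal_def)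
  then show ?thesis by (simp add: scal_def ext_def sum_distrib_left mult.assoc)
qed

lemma ext_mono: "ext f (mono w) = f w"
  by (subst ext_eq_sum_superset[of "{w}"]) (auto simp: mono_def)

lemma ext_fun_diff: "ext (\<lambda>w. f w - g w) a = ext f a - ext g a"
  unfolding ext_def by (simp add: right_diff_distrib sum_subtractf)

lemma sum_take_drop_indicator:
  "(\<Sum>k\<in>{0..length w}. if take k w = x \<and> drop k w = y then (c::complex) else 0)
     = (if w = x @ y then c else 0)"
proof -
  have "(take k w = x \<and> drop k w = y) \<longleftrightarrow> (k = length x \<and> w = x @ y)"
    if "k \<le> length w" for k
    using that by (metis append_eq_conv_conj append_take_drop_id length_take min.absorb2)
  then have "(\<Sum>k\<in>{0..length w}. if take k w = x \<and> drop k w = y then c else 0)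
      = (\<Sum>k\<in>{0..length w}. if k = length x then (if w = x @ y then c else 0) else 0)"
    by (intro sum.cong) auto
  then show ?thesis by (cases "w = x @ y") auto
qed

lemma supp_fmul: "supp (fmul a b) \<subseteq> (\<lambda>p. fst p @ snd p) ` (supp a \<times> supp b)"
proof
  fix w assume "w \<in> supp (fmul a b)"
  then obtain k where "k \<in> {0..length w}" "a (take k w) * b (drop k w) \<noteq> 0"
    unfolding fmul_def by (auto elim: sum.not_neutral_contains_not_neutral)
  then show "w \<in> (\<lambda>p. fst p @ snd p) ` (supp a \<times> supp b)"
    by (auto intro!: image_eqI[where x="(take k w, drop k w)"])
qed

lemma fin_supp_fmul: "fin_supp a \<Longrightarrow> fin_supp b \<Longrightarrow> fin_supp (fmul a b)"
  unfolding fin_supp_def by (rule finite_subset[OF supp_fmul]) auto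

lemma Fplus_fmul: "Fplus a \<Longrightarrow> Fplus b \<Longrightarrow> Fplus (fmul a b)"
  unfolding Fplus_def using fin_supp_fmul supp_fmul[of a b] by fastforce

lemma fmul_eq_sum:
  assumes "finite A" "finite B" "supp a \<subseteq> A" "supp b \<subseteq> B"
  shows "fmul a b w = (\<Sum>p\<in>A \<times> B. if w = fst p @ snd p then a (fst p) * b (snd p) else 0)"
proof -
  have "fmul a b w = (\<Sum>k\<in>{0..length w}. \<Sum>p\<in>A \<times> B.
      if (take k w, drop k w) = p then a (fst p) * b (snd p) else 0)"
    unfolding fmul_def
  proof (rule sum.cong[OF refl])
    fix k
    show "a (take k w) * b (drop k w)
        = (\<Sum>p\<in>A \<times> B. if (take k w, drop k w) = p then a (fst p) * b (snd p) else 0)"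
      using assms by (cases "(take k w, drop k w) \<in> A \<times> B") (auto simp: sum.delta' subset_iff)
  qed
  also have "\<dots> = (\<Sum>p\<in>A \<times> B. \<Sum>k\<in>{0..length w}.
      if take k w = fst p \<and> drop k w = snd p then a (fst p) * b (snd p) else 0)"
    by (subst sum.swap) (auto intro!: sum.cong simp: prod_eq_iff)
  finally show ?thesis by (simp add: sum_take_drop_indicator)
qed

lemma ext_fmul:
  assumes a: "fin_supp a" and b: "fin_supp b"
  shows "ext F (fmul a b) = (\<Sum>x\<in>supp a. \<Sum>y\<in>supp b. a x * b y * F (x @ y))"
proof -
  let ?A = "supp a" and ?B = "supp b"
  let ?W = "(\<lambda>p. fst p @ snd p) ` (?A \<times> ?B)"
  have A: "finite ?A" and B: "finite ?B" using a b by (auto simp: fin_supp_def)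
  then have W: "finite ?W" by auto
  have "ext F (fmul a b) = (\<Sum>w\<in>?W. fmul a b w * F w)"
    by (rule ext_eq_sum_superset[OF W supp_fmul])
  also have "\<dots> = (\<Sum>w\<in>?W. \<Sum>p\<in>?A \<times> ?B.
      if w = fst p @ snd p then a (fst p) * b (snd p) * F w else 0)"
    by (intro sum.cong refl, subst fmul_eq_sum[OF A B])
      (auto simp: sum_distrib_right intro!: sum.cong)
  also have "\<dots> = (\<Sum>p\<in>?A \<times> ?B. a (fst p) * b (snd p) * F (fst p @ snd p))"
    by (subst sum.swap) (use W in \<open>auto simp: sum.delta' intro!: sum.cong\<close>)
  finally show ?thesis by (simp add: sum.cartesian_product split_def)
qed

lemma supp_mono: "supp (mono x) = {x}"
  by (auto simp: mono_def)

lemma ext_fmul_mono_left: "fin_supp b \<Longrightarrow> ext F (fmul (mono x) b) = ext (\<lambda>w. F (x @ w)) b"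
  unfolding ext_fmul[OF fin_supp_mono] supp_mono by (simp add: ext_def mono_def)

lemma ext_fmul_mono_right: "fin_supp a \<Longrightarrow> ext F (fmul a (mono y)) = ext (\<lambda>w. F (w @ y)) a"
  unfolding ext_fmul[OF _ fin_supp_mono] supp_mono by (simp add: ext_def mono_def)

lemma fmul_mono_mono: "fmul (mono x) (mono y) = mono (x @ y)"
proof
  fix w
  have "fmul (mono x) (mono y) w
      = (\<Sum>k\<in>{0..length w}. if take k w = x \<and> drop k w = y then (1::complex) else 0)"
    unfolding fmul_def mono_def by (intro sum.cong) auto
  then show "fmul (mono x) (mono y) w = mono (x @ y) w"
    by (simp add: sum_take_drop_indicator mono_def)
qed

lemma fmul_esub_left: "fmul (esub a b) c = esub (fmul a c) (fmul b c)"
  by (simp add: fmul_def esub_def left_diff_distrib sum_subtractf)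

lemma fmul_esub_right: "fmul a (esub b c) = esub (fmul a b) (fmul a c)"
  by (simp add: fmul_def esub_def right_diff_distrib sum_subtractf)

lemma fmul_scal_left: "fmul (scal k a) c = scal k (fmul a c)"
  by (simp add: fmul_def scal_def sum_distrib_left mult.assoc)

lemma fmul_scal_right: "fmul a (scal k c) = scal k (fmul a c)"
  by (simp add: fmul_def scal_def sum_distrib_left mult.assoc mult.left_commute)

lemma supp_Pat: "supp (Pat P c) \<subseteq> (\<lambda>i. replicate i Z) ` {..degree P}"
proof
  fix w assume "w \<in> supp (Pat P c)"
  then have w: "\<forall>x\<in>set w. x = Z" "coeff P (length w) \<noteq> 0"
    by (auto simp: Pat_def split: if_splits)
  then have "length w \<le> degree P" by (simp add: le_degree)
  moreover have "w = replicate (length w) Z" using w(1) by (simp add: replicate_length_same)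
  ultimately show "w \<in> (\<lambda>i. replicate i Z) ` {..degree P}" by auto
qed

lemma fin_supp_Pat: "fin_supp (Pat P c)"
  unfolding fin_supp_def by (rule finite_subset[OF supp_Pat]) auto

lemma ext_Pat: "ext F (Pat P c) = (\<Sum>i\<le>degree P. coeff P i * c ^ i * F (replicate i Z))"
proof -
  have "ext F (Pat P c) = (\<Sum>w\<in>(\<lambda>i. replicate i Z) ` {..degree P}. Pat P c w * F w)"
    by (rule ext_eq_sum_superset[OF _ supp_Pat]) auto
  also have "\<dots> = (\<Sum>i\<le>degree P. Pat P c (replicate i Z) * F (replicate i Z))"
    by (subst sum.reindex) (auto simp: inj_on_def)
  finally show ?thesis by (simp add: Pat_def)
qed

lemma Fplus_mono: "ZI \<notin> set w \<Longrightarrow> Fplus (mono w)"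
  unfolding Fplus_def using fin_supp_mono[of w] by (auto simp: mono_def)

lemma Fplus_esub: "Fplus a \<Longrightarrow> Fplus b \<Longrightarrow> Fplus (esub a b)"
  unfolding Fplus_def using fin_supp_esub[of a b] by (auto simp: esub_def; metis)

lemma Fplus_scal: "Fplus a \<Longrightarrow> Fplus (scal c a)"
  unfolding Fplus_def using fin_supp_scal[of a c] by (auto simp: scal_def)

lemma Fplus_Pat: "Fplus (Pat P c)"
  unfolding Fplus_def using fin_supp_Pat[of P c] by (auto simp: Pat_def split: if_splits)

lemma rel_ideal_esub:
  assumes "a \<in> rel_ideal q P" "b \<in> rel_ideal q P"
  shows "esub a b \<in> rel_ideal q P"
proof -
  have "esub a b = eadd a (scal (-1) b)" by (auto simp: esub_def eadd_def scal_def)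
  then show ?thesis using assms by (simp add: rel_ideal.add rel_ideal.scal)
qed

definition vanishes_on_ideal :: "complex \<Rightarrow> complex poly \<Rightarrow> (word \<Rightarrow> complex) \<Rightarrow> bool" where
  "vanishes_on_ideal q P f \<longleftrightarrow> (\<forall>a. Fplus a \<and> a \<in> rel_ideal q P \<longrightarrow> ext f a = 0)"

lemma vanishes_on_ideal_sandwich:
  assumes f: "vanishes_on_ideal q P f" and r: "r \<in> rel_ideal q P" "Fplus r"
    and x: "ZI \<notin> set x" and y: "ZI \<notin> set y"
  shows "ext (\<lambda>w. f (x @ w @ y)) r = 0"
proof -
  let ?e = "fmul (mono x) (fmul r (mono y))"
  have "?e \<in> rel_ideal q P" using r(1) by (intro rel_ideal.left rel_ideal.right)
  moreover have "Fplus ?e" using r x y by (intro Fplus_fmul Fplus_mono) auto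
  ultimately have "ext f ?e = 0" using f by (auto simp: vanishes_on_ideal_def)
  moreover have "fin_supp r" using r by (simp add: Fplus_def)
  ultimately show ?thesis
    by (simp add: ext_fmul_mono_left ext_fmul_mono_right fin_supp_fmul fin_supp_mono)
qed

lemma word_product_relation:
  assumes f: "vanishes_on_ideal q P f" and rel: "esub (mono [g, h]) (Pat P c) \<in> rels q P"
    and x: "ZI \<notin> set x" and y: "ZI \<notin> set y" and gh: "g \<noteq> ZI" "h \<noteq> ZI"
  shows "f (x @ [g, h] @ y) = (\<Sum>i\<le>degree P. coeff P i * c ^ i * f (x @ replicate i Z @ y))"
proof -
  let ?r = "esub (mono [g, h]) (Pat P c)"
  have "Fplus ?r" using gh by (intro Fplus_esub Fplus_mono Fplus_Pat) auto
  then have "ext (\<lambda>w. f (x @ w @ y)) ?r = 0"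
    using vanishes_on_ideal_sandwich[OF f rel_ideal.gen[OF rel] _ x y] by blast
  then show ?thesis by (simp add: ext_esub fin_supp_mono fin_supp_Pat ext_mono ext_Pat)
qed

lemma word_UV:
  "vanishes_on_ideal q P f \<Longrightarrow> ZI \<notin> set x \<Longrightarrow> ZI \<notin> set y \<Longrightarrow>
    f (x @ [U, V] @ y) = (\<Sum>i\<le>degree P. coeff P i * inverse q ^ i * f (x @ replicate i Z @ y))"
  by (rule word_product_relation) (auto simp: rels_def)

lemma word_VU:
  "vanishes_on_ideal q P f \<Longrightarrow> ZI \<notin> set x \<Longrightarrow> ZI \<notin> set y \<Longrightarrow>
    f (x @ [V, U] @ y) = (\<Sum>i\<le>degree P. coeff P i * q ^ i * f (x @ replicate i Z @ y))"
  by (rule word_product_relation) (auto simp: rels_def)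

text \<open>From Z g Z^-1 = c g together with Z^-1 Z = 1 one obtains the Z^-1-free
  relation Z g = c g Z.\<close>

lemma word_conjugation_relation:
  assumes f: "vanishes_on_ideal q P f" and rel: "esub (mono [Z, g, ZI]) (scal c (mono [g])) \<in> rels q P"
    and x: "ZI \<notin> set x" and y: "ZI \<notin> set y" and g: "g \<noteq> ZI"
  shows "f (x @ [Z, g] @ y) = c * f (x @ [g, Z] @ y)"
proof -
  let ?r = "esub (mono [Z, g]) (scal c (mono [g, Z]))"
  have inv: "esub (mono [ZI, Z]) (mono []) \<in> rel_ideal q P"
    by (rule rel_ideal.gen) (simp add: rels_def)
  have "?r = esub (fmul (esub (mono [Z, g, ZI]) (scal c (mono [g]))) (mono [Z]))
                  (fmul (mono [Z, g]) (esub (mono [ZI, Z]) (mono [])))"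
    by (simp add: fmul_esub_left fmul_esub_right fmul_scal_left fmul_mono_mono)
      (auto simp: esub_def scal_def)
  then have "?r \<in> rel_ideal q P"
    using rel_ideal_esub[OF rel_ideal.right[OF rel_ideal.gen[OF rel]] rel_ideal.left[OF inv]]
    by simp
  moreover have "Fplus ?r" using g by (intro Fplus_esub Fplus_mono Fplus_scal) auto
  ultimately have "ext (\<lambda>w. f (x @ w @ y)) ?r = 0"
    using vanishes_on_ideal_sandwich[OF f _ _ x y] by blast
  then show ?thesis by (simp add: ext_esub fin_supp_mono fin_supp_scal ext_scal ext_mono)
qed

lemma wdeg_Nil [simp]: "wdeg [] = 0"
  and wdeg_Cons: "wdeg (g # w) = wdeg [g] + wdeg w"
  and wdeg_letter [simp]: "wdeg [U] = 1" "wdeg [V] = -1" "wdeg [Z] = 0"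
  by (cases g; simp add: wdeg_def)+

lemma word_Z_letter:
  assumes f: "vanishes_on_ideal q P f" and x: "ZI \<notin> set x" and y: "ZI \<notin> set y" and g: "g \<noteq> ZI"
  shows "f (x @ [Z, g] @ y) = q powi (2 * wdeg [g]) * f (x @ [g, Z] @ y)"
proof (cases g)
  case U
  then show ?thesis
    using word_conjugation_relation[OF f _ x y, of U "q^2"] by (simp add: rels_def)
next
  case V
  then show ?thesis
    using word_conjugation_relation[OF f _ x y, of V "inverse (q^2)"]
    by (simp add: rels_def power_int_minus)
qed (use g in simp_all)

lemma word_Z_commute:
  assumes f: "vanishes_on_ideal q P f" and q: "q \<noteq> 0"
    and x: "ZI \<notin> set x" and w: "ZI \<notin> set w" and y: "ZI \<notin> set y"
  shows "f (x @ Z # w @ y) = q powi (2 * wdeg w) * f (x @ w @ Z # y)"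
  using x w
proof (induction w arbitrary: x)
  case Nil
  then show ?case by simp
next
  case (Cons g w)
  have "f (x @ Z # (g # w) @ y) = f (x @ [Z, g] @ (w @ y))" by simp
  also have "\<dots> = q powi (2 * wdeg [g]) * f ((x @ [g]) @ Z # w @ y)"
    using Cons.prems y by (subst word_Z_letter[OF f]) auto
  also have "f ((x @ [g]) @ Z # w @ y) = q powi (2 * wdeg w) * f (x @ (g # w) @ Z # y)"
    using Cons by (subst Cons.IH) auto
  finally show ?case
    using q by (simp add: wdeg_Cons[of g w] power_int_add distrib_left)
qed

lemma powi_double: "(q::complex) powi (2 * int m * d) = ((q^2)^m) powi d"
  by (simp add: power_int_power mult.assoc)

lemma word_Zpow_commute:
  assumes f: "vanishes_on_ideal q P f" and q: "q \<noteq> 0"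
    and x: "ZI \<notin> set x" and w: "ZI \<notin> set w" and y: "ZI \<notin> set y"
  shows "f (x @ replicate i Z @ w @ y) = q powi (2 * int i * wdeg w) * f (x @ w @ replicate i Z @ y)"
  using x y
proof (induction i arbitrary: x y)
  case 0
  then show ?case by simp
next
  case (Suc i)
  have "f (x @ replicate (Suc i) Z @ w @ y) = f ((x @ [Z]) @ replicate i Z @ w @ y)"
    by (simp add: replicate_app_Cons_same)
  also have "\<dots> = q powi (2 * int i * wdeg w) * f (x @ Z # w @ (replicate i Z @ y))"
    using Suc by (subst Suc.IH) auto
  also have "f (x @ Z # w @ (replicate i Z @ y)) = q powi (2 * wdeg w) * f (x @ w @ replicate (Suc i) Z @ y)"
    using Suc.prems by (subst word_Z_commute[OF f q]) (auto simp: w)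
  finally show ?case
    using q by (simp add: power_int_add[symmetric] algebra_simps)
qed

section \<open>Reduction to normal forms\<close>

text \<open>nf k m is the monomial u^k Z^m, to be read as v^(-k) Z^m when k < 0.\<close>

definition upow :: "int \<Rightarrow> word" where
  "upow k = (if 0 \<le> k then replicate (nat k) U else replicate (nat (-k)) V)"

definition nf :: "int \<Rightarrow> nat \<Rightarrow> word" where
  "nf k m = upow k @ replicate m Z"

lemma ZI_notin_upow [simp]: "ZI \<notin> set (upow k)"
  by (auto simp: upow_def)

lemma ZI_notin_nf [simp]: "ZI \<notin> set (nf k m)"
  by (simp add: nf_def)

lemma nf_zero [simp]: "nf 0 m = replicate m Z"
  by (simp add: nf_def upow_def)

lemma wdeg_replicate: "wdeg (replicate n g) = int n * wdeg [g]"
proof (induction n)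
  case (Suc n)
  then show ?case by (simp add: wdeg_Cons[of g "replicate n g"] algebra_simps)
qed simp

lemma wdeg_upow [simp]: "wdeg (upow k) = k"
  by (simp add: upow_def wdeg_replicate)

lemma upow_nonneg_Suc: "0 \<le> k \<Longrightarrow> upow (k + 1) = U # upow k"
  by (simp add: upow_def nat_add_distrib)

lemma upow_nonpos_pred:
  assumes "k \<le> 0"
  shows "upow (k - 1) = V # upow k"
proof -
  have "nat (- (k - 1)) = Suc (nat (- k))" using assms by arith
  then show ?thesis using assms by (cases "k = 0") (simp_all add: upow_def)
qed

lemma upow_neg: "k < 0 \<Longrightarrow> upow k = V # upow (k + 1)"
  using upow_nonpos_pred[of "k + 1"] by simp

lemma upow_pos: "0 < k \<Longrightarrow> upow k = U # upow (k - 1)"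
  by (simp add: upow_def nat_diff_distrib' flip: replicate_Suc)

lemma upow_snoc_U: "0 \<le> k \<Longrightarrow> upow k @ [U] = upow (k + 1)"
  by (simp add: upow_nonneg_Suc) (simp add: upow_def replicate_append_same)

lemma upow_snoc_V: "k \<le> 0 \<Longrightarrow> upow k @ [V] = upow (k - 1)"
  by (simp add: upow_nonpos_pred) (simp add: upow_def replicate_append_same)

lemma upow_neg_snoc: "k < 0 \<Longrightarrow> upow k = upow (k + 1) @ [V]"
  using upow_snoc_V[of "k + 1"] by simp

lemma upow_pos_snoc: "0 < k \<Longrightarrow> upow k = upow (k - 1) @ [U]"
  using upow_snoc_U[of "k - 1"] by simp

lemma replicate_Z_append: "replicate i Z @ replicate m Z @ z = replicate (m + i) Z @ z"
  by (simp add: replicate_add[symmetric] add.commute)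

lemma power_times_powi: "(q::complex) \<noteq> 0 \<Longrightarrow> q ^ i * q powi a = q powi (int i + a)"
  by (simp add: power_int_add)

lemma inverse_power_times_powi: "(q::complex) \<noteq> 0 \<Longrightarrow> inverse q ^ i * q powi a = q powi (a - int i)"
  by (simp add: power_int_diff power_inverse field_simps)

definition lincomb :: "(int \<Rightarrow> nat \<Rightarrow> complex) \<Rightarrow> (complex \<times> int \<times> nat) list \<Rightarrow> complex" where
  "lincomb F L = sum_list (map (\<lambda>(c, k, m). c * F k m) L)"

lemma lincomb_Nil [simp]: "lincomb F [] = 0"
  and lincomb_Cons [simp]: "lincomb F ((c, k, m) # L) = c * F k m + lincomb F L"
  by (simp_all add: lincomb_def)

lemma lincomb_upt:
  "lincomb F (map (\<lambda>i. (c i, k, m + i)) [0..<Suc n]) = (\<Sum>i\<le>n. c i * F k (m + i))"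
  by (simp add: lincomb_def o_def sum_set_upt_conv_sum_list_nat[symmetric] atLeast0LessThan
      lessThan_Suc_atMost del: upt_Suc)

lemma lincomb_const_mult: "lincomb (\<lambda>k m. a * F k m) L = a * lincomb F L"
  by (induction L) (auto simp: algebra_simps)

lemma lincomb_zero [simp]: "lincomb (\<lambda>k m. 0) L = 0"
  using lincomb_const_mult[of 0 "\<lambda>k m. 0" L] by simp

lemma lincomb_bind:
  "lincomb F (concat (map (\<lambda>(c, k, m). map (\<lambda>(c', k', m'). (c * c', k', m')) (S k m)) L))
     = lincomb (\<lambda>k m. lincomb F (S k m)) L"
proof (induction L)
  case (Cons p L)
  obtain c k m where "p = (c, k, m)" by (cases p)
  moreover have "lincomb F (map (\<lambda>(c', k', m'). (c * c', k', m')) S') = c * lincomb F S'" for S'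
    by (induction S') (auto simp: algebra_simps)
  ultimately show ?case using Cons by (simp add: lincomb_def)
qed simp

definition letter_step :: "complex \<Rightarrow> complex poly \<Rightarrow> gen \<Rightarrow> int \<Rightarrow> nat \<Rightarrow> (complex \<times> int \<times> nat) list" where
  "letter_step q P g k m = (case g of
      Z \<Rightarrow> [(q powi (2 * k), k, Suc m)]
    | U \<Rightarrow> (if 0 \<le> k then [(1, k + 1, m)]
           else map (\<lambda>i. (coeff P i * q powi ((2 * k + 1) * int i), k + 1, m + i)) [0..<Suc (degree P)])
    | V \<Rightarrow> (if k \<le> 0 then [(1, k - 1, m)]
           else map (\<lambda>i. (coeff P i * q powi ((2 * k - 1) * int i), k - 1, m + i)) [0..<Suc (degree P)])
    | ZI \<Rightarrow> [])"

fun nf_expansion :: "complex \<Rightarrow> complex poly \<Rightarrow> word \<Rightarrow> (complex \<times> int \<times> nat) list" where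
  "nf_expansion q P [] = [(1, 0, 0)]"
| "nf_expansion q P (g # w) = concat (map (\<lambda>(c, k, m).
      map (\<lambda>(c', k', m'). (c * c', k', m')) (letter_step q P g k m)) (nf_expansion q P w))"

lemma letter_step_Z:
  assumes f: "vanishes_on_ideal q P f" and q: "q \<noteq> 0" and x: "ZI \<notin> set x" and z: "ZI \<notin> set z"
  shows "f (x @ Z # nf k m @ z) = lincomb (\<lambda>k' m'. f (x @ nf k' m' @ z)) (letter_step q P Z k m)"
  using word_Z_commute[OF f q x _ _, of "upow k" "replicate m Z @ z"] z
  by (simp add: nf_def letter_step_def)

lemma letter_step_U:
  assumes f: "vanishes_on_ideal q P f" and q: "q \<noteq> 0" and x: "ZI \<notin> set x" and z: "ZI \<notin> set z"
  shows "f (x @ U # nf k m @ z) = lincomb (\<lambda>k' m'. f (x @ nf k' m' @ z)) (letter_step q P U k m)"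
proof (cases "0 \<le> k")
  case True
  then show ?thesis by (simp add: letter_step_def nf_def upow_nonneg_Suc)
next
  case False
  have "f (x @ U # nf k m @ z) = f (x @ [U, V] @ upow (k + 1) @ replicate m Z @ z)"
    using False by (simp add: nf_def upow_neg)
  also have "\<dots> = (\<Sum>i\<le>degree P. coeff P i * inverse q ^ i
      * f (x @ replicate i Z @ upow (k + 1) @ replicate m Z @ z))"
    using z by (intro word_UV[OF f x]) simp
  also have "\<dots> = (\<Sum>i\<le>degree P. coeff P i * q powi ((2 * k + 1) * int i) * f (x @ nf (k + 1) (m + i) @ z))"
  proof (intro sum.cong refl)
    fix i
    have "f (x @ replicate i Z @ upow (k + 1) @ replicate m Z @ z)
        = q powi (2 * int i * (k + 1)) * f (x @ nf (k + 1) (m + i) @ z)"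
      using word_Zpow_commute[OF f q x, of "upow (k + 1)" "replicate m Z @ z" i] z
      by (simp add: nf_def replicate_Z_append)
    moreover have "inverse q ^ i * q powi (2 * int i * (k + 1)) = q powi ((2 * k + 1) * int i)"
      using q by (simp add: inverse_power_times_powi algebra_simps)
    ultimately show "coeff P i * inverse q ^ i * f (x @ replicate i Z @ upow (k + 1) @ replicate m Z @ z)
        = coeff P i * q powi ((2 * k + 1) * int i) * f (x @ nf (k + 1) (m + i) @ z)"
      by (metis mult.assoc)
  qed
  finally show ?thesis using False by (simp add: letter_step_def lincomb_upt del: upt_Suc)
qed

lemma letter_step_V:
  assumes f: "vanishes_on_ideal q P f" and q: "q \<noteq> 0" and x: "ZI \<notin> set x" and z: "ZI \<notin> set z"
  shows "f (x @ V # nf k m @ z) = lincomb (\<lambda>k' m'. f (x @ nf k' m' @ z)) (letter_step q P V k m)"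
proof (cases "k \<le> 0")
  case True
  then show ?thesis by (simp add: letter_step_def nf_def upow_nonpos_pred)
next
  case False
  have "f (x @ V # nf k m @ z) = f (x @ [V, U] @ upow (k - 1) @ replicate m Z @ z)"
    using False by (simp add: nf_def upow_pos)
  also have "\<dots> = (\<Sum>i\<le>degree P. coeff P i * q ^ i
      * f (x @ replicate i Z @ upow (k - 1) @ replicate m Z @ z))"
    using z by (intro word_VU[OF f x]) simp
  also have "\<dots> = (\<Sum>i\<le>degree P. coeff P i * q powi ((2 * k - 1) * int i) * f (x @ nf (k - 1) (m + i) @ z))"
  proof (intro sum.cong refl)
    fix i
    have "f (x @ replicate i Z @ upow (k - 1) @ replicate m Z @ z)
        = q powi (2 * int i * (k - 1)) * f (x @ nf (k - 1) (m + i) @ z)"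
      using word_Zpow_commute[OF f q x, of "upow (k - 1)" "replicate m Z @ z" i] z
      by (simp add: nf_def replicate_Z_append)
    moreover have "q ^ i * q powi (2 * int i * (k - 1)) = q powi ((2 * k - 1) * int i)"
      using q by (simp add: power_times_powi algebra_simps)
    ultimately show "coeff P i * q ^ i * f (x @ replicate i Z @ upow (k - 1) @ replicate m Z @ z)
        = coeff P i * q powi ((2 * k - 1) * int i) * f (x @ nf (k - 1) (m + i) @ z)"
      by (metis mult.assoc)
  qed
  finally show ?thesis using False by (simp add: letter_step_def lincomb_upt del: upt_Suc)
qed

lemma letter_step_correct:
  assumes "vanishes_on_ideal q P f" "q \<noteq> 0" "ZI \<notin> set x" "ZI \<notin> set z" "g \<noteq> ZI"
  shows "f (x @ g # nf k m @ z) = lincomb (\<lambda>k' m'. f (x @ nf k' m' @ z)) (letter_step q P g k m)"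
  using assms letter_step_Z letter_step_U letter_step_V by (cases g) auto

lemma eval_nf_expansion:
  assumes f: "vanishes_on_ideal q P f" and q: "q \<noteq> 0"
  shows "ZI \<notin> set x \<Longrightarrow> ZI \<notin> set w \<Longrightarrow> ZI \<notin> set z \<Longrightarrow>
    f (x @ w @ z) = lincomb (\<lambda>k m. f (x @ nf k m @ z)) (nf_expansion q P w)"
proof (induction w arbitrary: x)
  case Nil
  then show ?case by simp
next
  case (Cons g w)
  have "f (x @ (g # w) @ z) = lincomb (\<lambda>k m. f ((x @ [g]) @ nf k m @ z)) (nf_expansion q P w)"
    using Cons by (subst Cons.IH[symmetric]) auto
  also have "(\<lambda>k m. f ((x @ [g]) @ nf k m @ z))
      = (\<lambda>k m. lincomb (\<lambda>k' m'. f (x @ nf k' m' @ z)) (letter_step q P g k m))"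
    using Cons.prems letter_step_correct[OF f q _ Cons.prems(3), of _ g] by (intro ext) auto
  finally show ?case by (simp only: nf_expansion.simps lincomb_bind)
qed

lemma nf_snoc_U_nonneg:
  assumes f: "vanishes_on_ideal q P f" and q: "q \<noteq> 0" and k: "0 \<le> k"
  shows "f (nf k m @ [U]) = (q^2)^m * f (nf (k + 1) m)"
  using word_Zpow_commute[OF f q, of "upow k" "[U]" "[]" m] powi_double[of q m 1] k
  by (simp add: nf_def flip: upow_snoc_U)

lemma nf_snoc_U_neg:
  assumes f: "vanishes_on_ideal q P f" and q: "q \<noteq> 0" and k: "k < 0"
  shows "f (nf k m @ [U]) = (q^2)^m * (\<Sum>i\<le>degree P. coeff P i * q ^ i * f (nf (k + 1) (m + i)))"
proof -
  have "f (nf k m @ [U]) = (q^2)^m * f (upow (k + 1) @ [V, U] @ replicate m Z)"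
    using word_Zpow_commute[OF f q, of "upow k" "[U]" "[]" m] powi_double[of q m 1] k
    by (simp add: nf_def upow_neg_snoc[of k])
  also have "f (upow (k + 1) @ [V, U] @ replicate m Z)
      = (\<Sum>i\<le>degree P. coeff P i * q ^ i * f (nf (k + 1) (m + i)))"
    using word_VU[OF f, of "upow (k + 1)" "replicate m Z"]
    by (simp add: nf_def replicate_add[symmetric] add.commute)
  finally show ?thesis .
qed

lemma nf_snoc_V_nonpos:
  assumes f: "vanishes_on_ideal q P f" and q: "q \<noteq> 0" and k: "k \<le> 0"
  shows "f (nf k m @ [V]) = inverse ((q^2)^m) * f (nf (k - 1) m)"
  using word_Zpow_commute[OF f q, of "upow k" "[V]" "[]" m] powi_double[of q m "-1"] k
  by (simp add: nf_def power_int_minus flip: upow_snoc_V)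

lemma nf_snoc_V_pos:
  assumes f: "vanishes_on_ideal q P f" and q: "q \<noteq> 0" and k: "0 < k"
  shows "f (nf k m @ [V])
    = inverse ((q^2)^m) * (\<Sum>i\<le>degree P. coeff P i * inverse q ^ i * f (nf (k - 1) (m + i)))"
proof -
  have "f (nf k m @ [V]) = inverse ((q^2)^m) * f (upow (k - 1) @ [U, V] @ replicate m Z)"
    using word_Zpow_commute[OF f q, of "upow k" "[V]" "[]" m] powi_double[of q m "-1"] k
    by (simp add: nf_def power_int_minus upow_pos_snoc[of k])
  also have "f (upow (k - 1) @ [U, V] @ replicate m Z)
      = (\<Sum>i\<le>degree P. coeff P i * inverse q ^ i * f (nf (k - 1) (m + i)))"
    using word_UV[OF f, of "upow (k - 1)" "replicate m Z"]
    by (simp add: nf_def replicate_add[symmetric] add.commute)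
  finally show ?thesis .
qed

section \<open>Uniqueness\<close>

definition twisted_cyclic :: "complex \<Rightarrow> (word \<Rightarrow> complex) \<Rightarrow> bool" where
  "twisted_cyclic t f \<longleftrightarrow> (\<forall>a b. Fplus a \<and> Fplus b \<longrightarrow> ext f (fmul a b) = ext f (fmul b (gt t a)))"

lemma twisted_traces_iff:
  "f \<in> twisted_traces q P t \<longleftrightarrow>
     (\<forall>w. ZI \<in> set w \<longrightarrow> f w = 0) \<and> vanishes_on_ideal q P f \<and> twisted_cyclic t f"
  by (simp add: twisted_traces_def vanishes_on_ideal_def twisted_cyclic_def)

lemma twisted_cyclic_word:
  assumes f: "twisted_cyclic t f" and x: "ZI \<notin> set x" and y: "ZI \<notin> set y"
  shows "f (x @ y) = t powi wdeg x * f (y @ x)"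
proof -
  have "ext f (fmul (mono x) (mono y)) = ext f (fmul (mono y) (gt t (mono x)))"
    using f x y by (simp add: twisted_cyclic_def Fplus_mono)
  moreover have "gt t (mono x) = scal (t powi wdeg x) (mono x)"
    by (auto simp: gt_def scal_def mono_def)
  ultimately show ?thesis
    by (simp add: fmul_mono_mono fmul_scal_right ext_scal fin_supp_mono ext_mono)
qed

lemma twisted_cyclicI:
  assumes t: "t \<noteq> 0"
    and f: "\<And>x y. ZI \<notin> set x \<Longrightarrow> ZI \<notin> set y \<Longrightarrow> f (x @ y) = t powi wdeg x * f (y @ x)"
  shows "twisted_cyclic t f"
  unfolding twisted_cyclic_def
proof (intro allI impI)
  fix a b assume ab: "Fplus a \<and> Fplus b"
  then have a: "fin_supp a" and b: "fin_supp b" by (auto simp: Fplus_def)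
  have supp_gt: "supp (gt t a) = supp a" using t by (auto simp: gt_def)
  then have gt: "fin_supp (gt t a)" using a by (simp add: fin_supp_def)
  have "ext f (fmul a b) = (\<Sum>x\<in>supp a. \<Sum>y\<in>supp b. a x * b y * f (x @ y))"
    by (rule ext_fmul[OF a b])
  also have "\<dots> = (\<Sum>x\<in>supp a. \<Sum>y\<in>supp b. b y * gt t a x * f (y @ x))"
  proof (intro sum.cong refl)
    fix x y assume "x \<in> supp a" "y \<in> supp b"
    then have "ZI \<notin> set x" "ZI \<notin> set y" using ab by (auto simp: Fplus_def)
    then show "a x * b y * f (x @ y) = b y * gt t a x * f (y @ x)"
      by (subst f) (auto simp: gt_def)
  qed
  also have "\<dots> = ext f (fmul b (gt t a))"
    by (subst sum.swap) (simp add: ext_fmul[OF b gt] supp_gt)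
  finally show "ext f (fmul a b) = ext f (fmul b (gt t a))" .
qed

text \<open>The recurrence T(u v Z^j) = T(v Z^j g_t(u)), rewritten with u v = P(q^-1 Z) and
  v u = P(q Z).\<close>

definition rec_coeff :: "complex \<Rightarrow> complex poly \<Rightarrow> complex \<Rightarrow> nat \<Rightarrow> nat \<Rightarrow> complex" where
  "rec_coeff q P t j i = coeff P i * (inverse q ^ i - t * (q^2)^j * q ^ i)"

definition Zpow_recurrence :: "complex \<Rightarrow> complex poly \<Rightarrow> complex \<Rightarrow> (nat \<Rightarrow> complex) \<Rightarrow> bool" where
  "Zpow_recurrence q P t \<tau> \<longleftrightarrow> (\<forall>j. (\<Sum>i\<le>degree P. rec_coeff q P t j i * \<tau> (j + i)) = 0)"

lemma Zpow_recurrence_iff: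
  "Zpow_recurrence q P t \<tau> \<longleftrightarrow> (\<forall>j. (\<Sum>i\<le>degree P. coeff P i * inverse q ^ i * \<tau> (j + i))
     = t * (q^2)^j * (\<Sum>i\<le>degree P. coeff P i * q ^ i * \<tau> (j + i)))"
  by (simp add: Zpow_recurrence_def rec_coeff_def sum_distrib_left algebra_simps sum_subtractf)

lemma Zpow_recurrence_lead_nonzero:
  fixes q t :: complex
  assumes q: "q \<noteq> 0" and P: "P \<noteq> 0" and t: "\<forall>k. t \<noteq> inverse (q ^ (2 * k))"
  shows "rec_coeff q P t j (degree P) \<noteq> 0"
proof
  let ?n = "degree P"
  assume "rec_coeff q P t j ?n = 0"
  then have "coeff P ?n * (inverse q ^ ?n - t * (q^2)^j * q ^ ?n) = 0" by (simp add: rec_coeff_def)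
  moreover have "coeff P ?n \<noteq> 0" using P by simp
  ultimately have eq: "inverse q ^ ?n = t * (q^2)^j * q ^ ?n" by simp
  have "2 * (j + ?n) = 2 * j + ?n + ?n" by simp
  then have "t * q ^ (2 * (j + ?n)) = (t * (q^2)^j * q ^ ?n) * q ^ ?n"
    by (simp only: power_add power_mult mult.assoc)
  also have "\<dots> = 1" using q by (simp flip: eq add: power_inverse)
  finally have "t = inverse (q ^ (2 * (j + ?n)))" by (metis inverse_unique mult.commute)
  then show False using t by blast
qed

lemma Zpow_recurrence_zero:
  assumes rec: "Zpow_recurrence q P t \<tau>" and q: "q \<noteq> 0" and P: "P \<noteq> 0"
    and t: "\<forall>k. t \<noteq> inverse (q ^ (2 * k))" and init: "\<forall>i<degree P. \<tau> i = 0"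
  shows "\<tau> m = 0"
proof (induction m rule: less_induct)
  case (less m)
  let ?n = "degree P"
  show ?case
  proof (cases "m < ?n")
    case False
    define j where "j = m - ?n"
    have m: "m = j + ?n" using False by (simp add: j_def)
    have "(\<Sum>i\<le>?n. rec_coeff q P t j i * \<tau> (j + i)) = 0"
      using rec by (simp add: Zpow_recurrence_def)
    moreover have "\<tau> (j + i) = 0" if "i < ?n" for i
      using that m by (intro less.IH) simp
    ultimately have "rec_coeff q P t j ?n * \<tau> m = 0"
      by (simp add: m lessThan_Suc_atMost[symmetric] sum.lessThan_Suc)
    then show ?thesis using Zpow_recurrence_lead_nonzero[OF q P t] by simp
  qed (use init in simp)
qed

lemma trace_Zpow_recurrence:
  assumes f: "vanishes_on_ideal q P f" and cyc: "twisted_cyclic t f" and q: "q \<noteq> 0"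
  shows "Zpow_recurrence q P t (\<lambda>m. f (replicate m Z))"
  unfolding Zpow_recurrence_iff
proof
  fix j
  let ?Zj = "replicate j Z"
  have Zpow: "replicate i Z @ ?Zj = replicate (j + i) Z" for i
    by (simp add: replicate_add[symmetric] add.commute)
  have "(\<Sum>i\<le>degree P. coeff P i * inverse q ^ i * f (replicate (j + i) Z)) = f ([U] @ V # ?Zj)"
    using word_UV[OF f, of "[]" ?Zj] by (simp add: Zpow)
  also have "\<dots> = t * f ([V] @ ?Zj @ [U] @ [])"
    using twisted_cyclic_word[OF cyc, of "[U]" "V # ?Zj"] by simp
  also have "f ([V] @ ?Zj @ [U] @ []) = (q^2)^j * f ([] @ [V, U] @ ?Zj)"
    using word_Zpow_commute[OF f q, of "[V]" "[U]" "[]" j] powi_double[of q j 1] by simp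
  also have "f ([] @ [V, U] @ ?Zj) = (\<Sum>i\<le>degree P. coeff P i * q ^ i * f (replicate (j + i) Z))"
    using word_VU[OF f, of "[]" ?Zj] by (simp add: Zpow)
  finally show "(\<Sum>i\<le>degree P. coeff P i * inverse q ^ i * f (replicate (j + i) Z))
      = t * (q^2)^j * (\<Sum>i\<le>degree P. coeff P i * q ^ i * f (replicate (j + i) Z))"
    by (simp add: mult.assoc)
qed

lemma upow_rotate:
  assumes "k \<noteq> 0"
  obtains g rest where "upow k = g # rest" "rest @ [g] = upow k" "wdeg [g] = 1 \<or> wdeg [g] = -1"
proof (cases "0 < k")
  case True
  then have "upow k = U # replicate (nat k - 1) U" by (simp add: upow_def flip: replicate_Suc)
  then show ?thesis using that[of U "replicate (nat k - 1) U"] by (simp add: replicate_append_same)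
next
  case False
  then have "upow k = V # replicate (nat (- k) - 1) V"
    using assms by (simp add: upow_def flip: replicate_Suc)
  then show ?thesis using that[of V "replicate (nat (- k) - 1) V"] by (simp add: replicate_append_same)
qed

lemma trace_nf_zero:
  assumes f: "vanishes_on_ideal q P f" and cyc: "twisted_cyclic t f" and q: "q \<noteq> 0"
    and t: "\<forall>k. t \<noteq> inverse (q ^ (2 * k))" and k: "k \<noteq> 0"
  shows "f (nf k m) = 0"
proof -
  obtain g rest where g: "upow k = g # rest" "rest @ [g] = upow k" and d: "wdeg [g] = 1 \<or> wdeg [g] = -1"
    using upow_rotate[OF k] by blast
  have ZI: "g \<noteq> ZI" "ZI \<notin> set rest" using ZI_notin_upow[of k] unfolding g(1) by auto
  let ?d = "wdeg [g]" and ?Zm = "replicate m Z"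
  have "f (nf k m) = f ([g] @ rest @ ?Zm)" by (simp add: nf_def g(1))
  also have "\<dots> = t powi ?d * f (rest @ ?Zm @ [g] @ [])"
    using twisted_cyclic_word[OF cyc, of "[g]" "rest @ ?Zm"] ZI by simp
  also have "f (rest @ ?Zm @ [g] @ []) = q powi (2 * int m * ?d) * f (nf k m)"
    using word_Zpow_commute[OF f q, of rest "[g]" "[]" m] ZI by (simp add: nf_def flip: g(2))
  finally have "f (nf k m) = (t powi ?d * q powi (2 * int m * ?d)) * f (nf k m)" by simp
  moreover have "t powi ?d * q powi (2 * int m * ?d) = (t * (q^2)^m) powi ?d"
    by (simp add: powi_double power_int_mult_distrib)
  moreover have "(t * (q^2)^m) powi ?d \<noteq> 1"
  proof -
    have X: "t * (q^2)^m \<noteq> 1"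
      using t by (metis inverse_unique mult.commute power_mult)
    have "(t * (q^2)^m) powi (-1) = inverse (t * (q^2)^m)"
      by (simp only: power_int_minus power_int_of_nat[of _ 1, simplified] mult_1_right)
    then show ?thesis using d X by (auto simp del: inverse_mult_distrib)
  qed
  ultimately show ?thesis by (metis mult_cancel_right2)
qed

lemma twisted_traces_diff:
  "f1 \<in> twisted_traces q P t \<Longrightarrow> f2 \<in> twisted_traces q P t \<Longrightarrow>
    (\<lambda>w. f1 w - f2 w) \<in> twisted_traces q P t"
  by (simp add: twisted_traces_def ext_fun_diff)

lemma twisted_trace_eq_zero:
  assumes f: "f \<in> twisted_traces q P t" and q: "q \<noteq> 0" and P: "P \<noteq> 0"
    and t: "\<forall>k. t \<noteq> inverse (q ^ (2 * k))" and init: "\<forall>i<degree P. f (replicate i Z) = 0"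
  shows "f w = 0"
proof (cases "ZI \<in> set w")
  case False
  have f: "vanishes_on_ideal q P f" and cyc: "twisted_cyclic t f"
    using f by (simp_all add: twisted_traces_iff)
  have "f (nf k m) = 0" for k m
  proof (cases "k = 0")
    case True
    then show ?thesis
      using Zpow_recurrence_zero[OF trace_Zpow_recurrence[OF f cyc q] q P t] init by simp
  qed (rule trace_nf_zero[OF f cyc q t])
  then show ?thesis
    using eval_nf_expansion[OF f q, of "[]" w "[]"] False by simp
qed (use f in \<open>simp add: twisted_traces_iff\<close>)

section \<open>A representation annihilating the relations\<close>

text \<open>act_letter q P g v is the coefficient function of g \<cdot> (\<Sum> v k m u^k Z^m),
  with m ranging over all integers so that Z acts invertibly.\<close>

type_synonym vec = "int \<Rightarrow> int \<Rightarrow> complex"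

definition act_Z :: "complex \<Rightarrow> vec \<Rightarrow> vec" where
  "act_Z q v k m = q powi (2 * k) * v k (m - 1)"

definition act_ZI :: "complex \<Rightarrow> vec \<Rightarrow> vec" where
  "act_ZI q v k m = q powi (- (2 * k)) * v k (m + 1)"

definition act_U :: "complex \<Rightarrow> complex poly \<Rightarrow> vec \<Rightarrow> vec" where
  "act_U q P v k m = (if 1 \<le> k then v (k - 1) m
     else (\<Sum>i\<le>degree P. coeff P i * q powi ((2 * k - 1) * int i) * v (k - 1) (m - int i)))"

definition act_V :: "complex \<Rightarrow> complex poly \<Rightarrow> vec \<Rightarrow> vec" where
  "act_V q P v k m = (if k \<le> -1 then v (k + 1) m
     else (\<Sum>i\<le>degree P. coeff P i * q powi ((2 * k + 1) * int i) * v (k + 1) (m - int i)))"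

fun act_letter :: "complex \<Rightarrow> complex poly \<Rightarrow> gen \<Rightarrow> vec \<Rightarrow> vec" where
  "act_letter q P U = act_U q P"
| "act_letter q P V = act_V q P"
| "act_letter q P Z = act_Z q"
| "act_letter q P ZI = act_ZI q"

fun act_word :: "complex \<Rightarrow> complex poly \<Rightarrow> word \<Rightarrow> vec \<Rightarrow> vec" where
  "act_word q P [] v = v"
| "act_word q P (g # w) v = act_letter q P g (act_word q P w v)"

lemma act_word_append: "act_word q P (x @ y) v = act_word q P x (act_word q P y v)"
  by (induction x) auto

lemma act_letter_add: "act_letter q P g (\<lambda>k m. a k m + b k m) k m = act_letter q P g a k m + act_letter q P g b k m"
  by (cases g) (auto simp: act_U_def act_V_def act_Z_def act_ZI_def algebra_simps sum.distrib)

lemma act_letter_scale: "act_letter q P g (\<lambda>k m. c * a k m) k m = c * act_letter q P g a k m"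
  by (cases g) (auto simp: act_U_def act_V_def act_Z_def act_ZI_def algebra_simps sum_distrib_left)

lemma act_letter_zero: "act_letter q P g (\<lambda>k m. 0) k m = 0"
  using act_letter_scale[of q P g 0 "\<lambda>k m. 0" k m] by simp

lemma act_letter_sum:
  assumes "finite S"
  shows "act_letter q P g (\<lambda>k m. \<Sum>j\<in>S. c j * h j k m) k m = (\<Sum>j\<in>S. c j * act_letter q P g (h j) k m)"
  using assms
proof (induction S arbitrary: k m rule: finite_induct)
  case empty
  then show ?case by (simp add: act_letter_zero)
next
  case (insert x F)
  then show ?case by (simp add: act_letter_add act_letter_scale)
qed

lemma act_word_sum:
  assumes "finite S"
  shows "act_word q P x (\<lambda>k m. \<Sum>j\<in>S. c j * h j k m) k m = (\<Sum>j\<in>S. c j * act_word q P x (h j) k m)"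
proof (induction x arbitrary: k m)
  case (Cons g x)
  have "act_word q P x (\<lambda>k m. \<Sum>j\<in>S. c j * h j k m) = (\<lambda>k m. \<Sum>j\<in>S. c j * act_word q P x (h j) k m)"
    by (intro ext) (rule Cons.IH)
  then show ?case by (simp add: act_letter_sum[OF assms])
qed simp

lemma act_word_zero: "act_word q P x (\<lambda>k m. 0) k m = 0"
  using act_word_sum[of "{}" q P x "\<lambda>_. 0" "\<lambda>_ _ _. 0" k m] by simp

lemma act_word_ext:
  assumes "fin_supp a"
  shows "ext (\<lambda>w. act_word q P x (F w) k m) a = act_word q P x (\<lambda>k m. ext (\<lambda>w. F w k m) a) k m"
  using assms by (simp add: ext_def act_word_sum fin_supp_def)

lemma act_letter_lincomb:
  "act_letter q P g (\<lambda>k m. lincomb (\<lambda>k0 m0. F k0 m0 k m) L) k m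
     = lincomb (\<lambda>k0 m0. act_letter q P g (F k0 m0) k m) L"
proof (induction L arbitrary: k m)
  case Nil
  then show ?case by (simp add: act_letter_zero)
next
  case (Cons p L)
  then show ?case by (cases p) (simp add: act_letter_add act_letter_scale)
qed

lemma act_word_Zpow:
  assumes q: "q \<noteq> 0"
  shows "act_word q P (replicate i Z) v k m = q powi (2 * k * int i) * v k (m - int i)"
proof (induction i arbitrary: m)
  case (Suc i)
  have "act_word q P (replicate (Suc i) Z) v k m = q powi (2 * k) * q powi (2 * k * int i) * v k (m - 1 - int i)"
    using Suc by (simp add: act_Z_def)
  also have "q powi (2 * k) * q powi (2 * k * int i) = q powi (2 * k * int (Suc i))"
    using q by (simp add: power_int_add[symmetric] algebra_simps)
  finally show ?case by (simp add: algebra_simps)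
qed simp

lemma act_Z_ZI: "q \<noteq> 0 \<Longrightarrow> act_Z q (act_ZI q v) k m = v k m"
  and act_ZI_Z: "q \<noteq> 0 \<Longrightarrow> act_ZI q (act_Z q v) k m = v k m"
  by (simp_all add: act_Z_def act_ZI_def mult.assoc[symmetric] power_int_add[symmetric])

lemma act_Z_U_ZI:
  assumes q: "q \<noteq> 0"
  shows "act_Z q (act_U q P (act_ZI q v)) k m = q^2 * act_U q P v k m"
proof -
  have c: "q powi (2 * k) * q powi (2 - 2 * k) = q^2"
    using q by (simp add: power_int_add[symmetric])
  have e: "q powi (2 * k) * (A * (q powi (2 - 2 * k) * B)) = q^2 * (A * B)" for A B
    by (simp add: c[symmetric] algebra_simps)
  show ?thesis
  proof (cases "1 \<le> k")
    case True
    then show ?thesis by (simp add: act_Z_def act_U_def act_ZI_def mult.assoc[symmetric] c)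
  next
    case False
    then show ?thesis by (simp add: act_Z_def act_U_def act_ZI_def sum_distrib_left e)
  qed
qed

lemma act_Z_V_ZI:
  assumes q: "q \<noteq> 0"
  shows "act_Z q (act_V q P (act_ZI q v)) k m = inverse (q^2) * act_V q P v k m"
proof -
  have c: "q powi (2 * k) * q powi (- (2 * k) - 2) = inverse (q^2)"
    using q by (simp add: power_int_add[symmetric] power_int_minus)
  have e: "q powi (2 * k) * (A * (q powi (- (2 * k) - 2) * B)) = inverse (q^2) * (A * B)" for A B
    by (simp add: c[symmetric] algebra_simps)
  show ?thesis
  proof (cases "k \<le> -1")
    case True
    then show ?thesis by (simp add: act_Z_def act_V_def act_ZI_def mult.assoc[symmetric] c)
  next
    case False
    then show ?thesis by (simp add: act_Z_def act_V_def act_ZI_def sum_distrib_left e)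
  qed
qed

lemma act_U_V:
  assumes q: "q \<noteq> 0"
  shows "act_U q P (act_V q P v) k m
     = (\<Sum>i\<le>degree P. coeff P i * inverse q ^ i * act_word q P (replicate i Z) v k m)"
proof -
  have "inverse q ^ i * q powi (2 * k * int i) = q powi ((2 * k - 1) * int i)" for i
    using q by (simp add: inverse_power_times_powi algebra_simps)
  then show ?thesis
    by (cases "1 \<le> k") (simp_all add: act_U_def act_V_def act_word_Zpow[OF q] mult.assoc
        algebra_simps)
qed

lemma act_V_U:
  assumes q: "q \<noteq> 0"
  shows "act_V q P (act_U q P v) k m
     = (\<Sum>i\<le>degree P. coeff P i * q ^ i * act_word q P (replicate i Z) v k m)"
proof -
  have "q ^ i * q powi (2 * k * int i) = q powi ((2 * k + 1) * int i)" for i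
    using q by (simp add: power_times_powi algebra_simps)
  then show ?thesis
    by (cases "k \<le> -1") (simp_all add: act_U_def act_V_def act_word_Zpow[OF q] mult.assoc
        algebra_simps)
qed

lemma act_word_rel_ideal:
  assumes "a \<in> rel_ideal q P" and q: "q \<noteq> 0"
  shows "fin_supp a \<and> (\<forall>v k m. ext (\<lambda>w. act_word q P w v k m) a = 0)"
  using assms(1)
proof induction
  case (gen r)
  then show ?case
    using q by (auto simp: rels_def ext_esub ext_scal ext_mono ext_Pat fin_supp_esub fin_supp_mono
        fin_supp_scal fin_supp_Pat act_Z_ZI act_ZI_Z act_Z_U_ZI act_Z_V_ZI act_U_V act_V_U)
next
  case (add a b)
  then show ?case by (simp add: fin_supp_eadd ext_eadd)
next
  case (scal a c)
  then show ?case by (simp add: fin_supp_scal ext_scal)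
next
  case (left a x)
  then have "ext (\<lambda>w. act_word q P w v k m) (fmul (mono x) a) = 0" for v k m
    by (simp add: ext_fmul_mono_left act_word_append act_word_ext act_word_zero)
  then show ?case using left by (simp add: fin_supp_fmul fin_supp_mono)
next
  case (right a x)
  then show ?case by (simp add: ext_fmul_mono_right act_word_append fin_supp_fmul fin_supp_mono)
qed

section \<open>Existence\<close>

definition basis_vec :: "int \<Rightarrow> nat \<Rightarrow> vec" where
  "basis_vec k0 m0 = (\<lambda>k m. if k = k0 \<and> m = int m0 then 1 else 0)"

lemma act_letter_basis_vec:
  assumes "g \<noteq> ZI"
  shows "act_letter q P g (basis_vec k0 m0) k m
     = lincomb (\<lambda>k' m'. basis_vec k' m' k m) (letter_step q P g k0 m0)"
proof (cases g)
  case U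
  show ?thesis
  proof (cases "0 \<le> k0")
    case False
    then have "lincomb (\<lambda>k' m'. basis_vec k' m' k m) (letter_step q P U k0 m0)
        = (\<Sum>i\<le>degree P. coeff P i * q powi ((2 * k0 + 1) * int i) * basis_vec (k0 + 1) (m0 + i) k m)"
      by (simp add: letter_step_def lincomb_upt del: upt_Suc)
    then show ?thesis
      using False U by (cases "k = k0 + 1") (auto simp: act_U_def basis_vec_def algebra_simps intro!: sum.cong)
  qed (auto simp: U act_U_def letter_step_def basis_vec_def)
next
  case V
  show ?thesis
  proof (cases "k0 \<le> 0")
    case False
    then have "lincomb (\<lambda>k' m'. basis_vec k' m' k m) (letter_step q P V k0 m0)
        = (\<Sum>i\<le>degree P. coeff P i * q powi ((2 * k0 - 1) * int i) * basis_vec (k0 - 1) (m0 + i) k m)"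
      by (simp add: letter_step_def lincomb_upt del: upt_Suc)
    then show ?thesis
      using False V by (cases "k = k0 - 1") (auto simp: act_V_def basis_vec_def algebra_simps intro!: sum.cong)
  qed (auto simp: V act_V_def letter_step_def basis_vec_def)
next
  case Z
  then show ?thesis by (auto simp: act_Z_def letter_step_def basis_vec_def)
qed (use assms in simp)

lemma act_word_basis_vec:
  "ZI \<notin> set w \<Longrightarrow> act_word q P w (basis_vec 0 0) k m
     = lincomb (\<lambda>k0 m0. basis_vec k0 m0 k m) (nf_expansion q P w)"
proof (induction w arbitrary: k m)
  case (Cons g w)
  then have g: "g \<noteq> ZI" and "ZI \<notin> set w" by auto
  then have "act_word q P w (basis_vec 0 0)
      = (\<lambda>k m. lincomb (\<lambda>k0 m0. basis_vec k0 m0 k m) (nf_expansion q P w))"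
    using Cons.IH by blast
  then have "act_word q P (g # w) (basis_vec 0 0) k m = lincomb (\<lambda>k0 m0.
      lincomb (\<lambda>k' m'. basis_vec k' m' k m) (letter_step q P g k0 m0)) (nf_expansion q P w)"
    by (simp add: act_letter_lincomb act_letter_basis_vec[OF g])
  then show ?case by (simp only: nf_expansion.simps lincomb_bind)
qed (simp add: basis_vec_def)

definition nf_trace :: "complex \<Rightarrow> complex poly \<Rightarrow> (nat \<Rightarrow> complex) \<Rightarrow> word \<Rightarrow> complex" where
  "nf_trace q P \<tau> w =
     (if ZI \<in> set w then 0 else lincomb (\<lambda>k m. if k = 0 then \<tau> m else 0) (nf_expansion q P w))"

lemma lincomb_diagonal_eq_sum:
  assumes M: "finite M" and L: "\<forall>(c, k, m) \<in> set L. m \<in> M"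
  shows "lincomb (\<lambda>k m. if k = 0 then \<tau> m else 0) L
       = (\<Sum>m\<in>M. \<tau> m * lincomb (\<lambda>k0 m0. basis_vec k0 m0 0 (int m)) L)"
  using L
proof (induction L)
  case (Cons p L)
  obtain c k0 m0 where p: "p = (c, k0, m0)" by (cases p)
  have "(\<Sum>m\<in>M. \<tau> m * (c * basis_vec k0 m0 0 (int m))) = c * (if k0 = 0 then \<tau> m0 else 0)"
    using M Cons.prems p by (simp add: basis_vec_def if_distrib sum.delta cong: if_cong)
  then show ?case
    using Cons by (simp add: p distrib_left sum.distrib)
qed simp

lemma nf_trace_vanishes_on_ideal:
  assumes q: "q \<noteq> 0"
  shows "vanishes_on_ideal q P (nf_trace q P \<tau>)"
  unfolding vanishes_on_ideal_def
proof (intro allI impI)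
  fix a assume a: "Fplus a \<and> a \<in> rel_ideal q P"
  then have fin: "finite (supp a)" and ZI: "\<And>w. w \<in> supp a \<Longrightarrow> ZI \<notin> set w"
    by (auto simp: Fplus_def fin_supp_def)
  define M where "M = (\<Union>w\<in>supp a. (\<lambda>(c, k, m). m) ` set (nf_expansion q P w))"
  have M: "finite M" using fin by (simp add: M_def)
  have "ext (nf_trace q P \<tau>) a
      = (\<Sum>w\<in>supp a. a w * (\<Sum>m\<in>M. \<tau> m * act_word q P w (basis_vec 0 0) 0 (int m)))"
    unfolding ext_def
  proof (intro sum.cong refl)
    fix w assume w: "w \<in> supp a"
    have "m \<in> M" if "(c, k, m) \<in> set (nf_expansion q P w)" for c k m
      unfolding M_def using w that by (intro UN_I[of w]) (auto intro: image_eqI[where x="(c, k, m)"])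
    then have "\<forall>(c, k, m) \<in> set (nf_expansion q P w). m \<in> M" by auto
    then have "nf_trace q P \<tau> w = (\<Sum>m\<in>M. \<tau> m * act_word q P w (basis_vec 0 0) 0 (int m))"
      using ZI[OF w] by (simp add: nf_trace_def act_word_basis_vec lincomb_diagonal_eq_sum[OF M])
    then show "a w * nf_trace q P \<tau> w = a w * (\<Sum>m\<in>M. \<tau> m * act_word q P w (basis_vec 0 0) 0 (int m))"
      by simp
  qed
  also have "\<dots> = (\<Sum>m\<in>M. \<tau> m * ext (\<lambda>w. act_word q P w (basis_vec 0 0) 0 (int m)) a)"
    by (simp add: ext_def sum_distrib_left sum.swap[of _ "supp a"] algebra_simps)
  also have "\<dots> = 0"
    using act_word_rel_ideal[OF _ q] a by simp
  finally show "ext (nf_trace q P \<tau>) a = 0" .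
qed

lemma nf_expansion_Zpow: "nf_expansion q P (replicate m Z) = [(1, 0, m)]"
  by (induction m) (auto simp: letter_step_def)

lemma nf_expansion_nf: "nf_expansion q P (nf k m) = [(1, k, m)]"
proof -
  have U: "nf_expansion q P (replicate j U @ replicate m Z) = [(1, int j, m)]" for j
    by (induction j) (auto simp: letter_step_def nf_expansion_Zpow)
  have V: "nf_expansion q P (replicate j V @ replicate m Z) = [(1, - int j, m)]" for j
    by (induction j) (auto simp: letter_step_def nf_expansion_Zpow)
  show ?thesis by (cases "0 \<le> k") (simp_all add: nf_def upow_def U V)
qed

lemma nf_trace_nf: "nf_trace q P \<tau> (nf k m) = (if k = 0 then \<tau> m else 0)"
  by (simp add: nf_trace_def nf_expansion_nf)
lemma nf_trace_Zpow: "nf_trace q P \<tau> (replicate m Z) = \<tau> m"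
  using nf_trace_nf[of q P \<tau> 0 m] by simp


lemma nf_trace_Z:
  assumes q: "q \<noteq> 0"
  shows "nf_trace q P \<tau> (Z # nf k m) = nf_trace q P \<tau> (nf k m @ [Z])"
proof -
  have "nf_trace q P \<tau> (Z # nf k m) = q powi (2 * k) * nf_trace q P \<tau> (nf k (Suc m))"
    using letter_step_Z[OF nf_trace_vanishes_on_ideal[OF q] q, where x="[]" and z="[]"]
    by (simp add: letter_step_def)
  moreover have "nf k m @ [Z] = nf k (Suc m)" by (simp add: nf_def replicate_append_same)
  ultimately show ?thesis by (simp add: nf_trace_nf)
qed

lemma nf_trace_U:
  assumes q: "q \<noteq> 0" and rec: "Zpow_recurrence q P t \<tau>"
  shows "nf_trace q P \<tau> (U # nf k m) = t * nf_trace q P \<tau> (nf k m @ [U])"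
proof -
  let ?f = "nf_trace q P \<tau>"
  have f: "vanishes_on_ideal q P ?f" using q by (rule nf_trace_vanishes_on_ideal)
  have lhs: "?f (U # nf k m) = lincomb (\<lambda>k' m'. ?f (nf k' m')) (letter_step q P U k m)"
    using letter_step_U[OF f q, where x="[]" and z="[]"] by simp
  show ?thesis
  proof (cases "0 \<le> k")
    case True
    then show ?thesis
      using lhs nf_snoc_U_nonneg[OF f q True] by (simp add: letter_step_def nf_trace_nf)
  next
    case False
    then have lhs': "?f (U # nf k m)
        = (\<Sum>i\<le>degree P. coeff P i * q powi ((2 * k + 1) * int i) * ?f (nf (k + 1) (m + i)))"
      using lhs by (simp add: letter_step_def lincomb_upt del: upt_Suc)
    have rhs: "?f (nf k m @ [U]) = (q^2)^m * (\<Sum>i\<le>degree P. coeff P i * q ^ i * ?f (nf (k + 1) (m + i)))"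
      using False by (intro nf_snoc_U_neg[OF f q]) simp
    show ?thesis
    proof (cases "k = -1")
      case True
      have "q powi ((2 * k + 1) * int i) = inverse q ^ i" for i
        using True by (simp add: power_int_minus power_inverse)
      moreover have "(\<Sum>i\<le>degree P. coeff P i * inverse q ^ i * \<tau> (m + i))
          = t * (q^2)^m * (\<Sum>i\<le>degree P. coeff P i * q ^ i * \<tau> (m + i))"
        using rec by (simp add: Zpow_recurrence_iff)
      ultimately show ?thesis
        using lhs' rhs True by (simp add: nf_trace_Zpow mult.assoc)
    qed (use lhs' rhs False in \<open>simp add: nf_trace_nf\<close>)
  qed
qed

lemma nf_trace_V:
  assumes q: "q \<noteq> 0" and t: "t \<noteq> 0" and rec: "Zpow_recurrence q P t \<tau>"
  shows "nf_trace q P \<tau> (V # nf k m) = inverse t * nf_trace q P \<tau> (nf k m @ [V])"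
proof -
  let ?f = "nf_trace q P \<tau>"
  have f: "vanishes_on_ideal q P ?f" using q by (rule nf_trace_vanishes_on_ideal)
  have lhs: "?f (V # nf k m) = lincomb (\<lambda>k' m'. ?f (nf k' m')) (letter_step q P V k m)"
    using letter_step_V[OF f q, where x="[]" and z="[]"] by simp
  show ?thesis
  proof (cases "k \<le> 0")
    case True
    then show ?thesis
      using lhs nf_snoc_V_nonpos[OF f q True] by (simp add: letter_step_def nf_trace_nf)
  next
    case False
    then have lhs': "?f (V # nf k m)
        = (\<Sum>i\<le>degree P. coeff P i * q powi ((2 * k - 1) * int i) * ?f (nf (k - 1) (m + i)))"
      using lhs by (simp add: letter_step_def lincomb_upt del: upt_Suc)
    have rhs: "?f (nf k m @ [V])
        = inverse ((q^2)^m) * (\<Sum>i\<le>degree P. coeff P i * inverse q ^ i * ?f (nf (k - 1) (m + i)))"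
      using False by (intro nf_snoc_V_pos[OF f q]) simp
    show ?thesis
    proof (cases "k = 1")
      case True
      have "(\<Sum>i\<le>degree P. coeff P i * inverse q ^ i * \<tau> (m + i))
          = t * (q^2)^m * (\<Sum>i\<le>degree P. coeff P i * q ^ i * \<tau> (m + i))"
        using rec by (simp add: Zpow_recurrence_iff)
      then have "?f (nf k m @ [V])
          = inverse ((q^2)^m) * (t * (q^2)^m * (\<Sum>i\<le>degree P. coeff P i * q ^ i * \<tau> (m + i)))"
        using rhs True by (simp add: nf_trace_Zpow)
      also have "\<dots> = t * (\<Sum>i\<le>degree P. coeff P i * q ^ i * \<tau> (m + i))"
        using q by simp
      finally show ?thesis
        using lhs' True t by (simp add: nf_trace_Zpow)
    qed (use lhs' rhs False in \<open>simp add: nf_trace_nf\<close>)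
  qed
qed

lemma nf_trace_letter:
  assumes q: "q \<noteq> 0" and t: "t \<noteq> 0" and rec: "Zpow_recurrence q P t \<tau>"
    and g: "g \<noteq> ZI" and y: "ZI \<notin> set y"
  shows "nf_trace q P \<tau> (g # y) = t powi wdeg [g] * nf_trace q P \<tau> (y @ [g])"
proof -
  let ?f = "nf_trace q P \<tau>" and ?L = "nf_expansion q P y"
  have f: "vanishes_on_ideal q P ?f" using q by (rule nf_trace_vanishes_on_ideal)
  have nf: "?f (g # nf k m) = t powi wdeg [g] * ?f (nf k m @ [g])" for k m
    using g nf_trace_Z[OF q] nf_trace_U[OF q rec] nf_trace_V[OF q t rec]
    by (cases g) (auto simp: power_int_minus)
  have "?f ([g] @ y @ []) = lincomb (\<lambda>k m. ?f ([g] @ nf k m @ [])) ?L"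
    using g y by (intro eval_nf_expansion[OF f q]) auto
  also have "\<dots> = t powi wdeg [g] * lincomb (\<lambda>k m. ?f ([] @ nf k m @ [g])) ?L"
    by (simp add: nf lincomb_const_mult)
  also have "lincomb (\<lambda>k m. ?f ([] @ nf k m @ [g])) ?L = ?f ([] @ y @ [g])"
    using g y by (intro eval_nf_expansion[OF f q, symmetric]) auto
  finally show ?thesis by simp
qed

lemma nf_trace_twisted_cyclic:
  assumes q: "q \<noteq> 0" and t: "t \<noteq> 0" and rec: "Zpow_recurrence q P t \<tau>"
  shows "twisted_cyclic t (nf_trace q P \<tau>)"
proof (rule twisted_cyclicI[OF t])
  fix x y :: word
  show "ZI \<notin> set x \<Longrightarrow> ZI \<notin> set y \<Longrightarrow>
      nf_trace q P \<tau> (x @ y) = t powi wdeg x * nf_trace q P \<tau> (y @ x)"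
  proof (induction x arbitrary: y)
    case (Cons g x)
    have "nf_trace q P \<tau> ((g # x) @ y) = t powi wdeg [g] * nf_trace q P \<tau> (x @ (y @ [g]))"
      using Cons.prems nf_trace_letter[OF q t rec, of g "x @ y"] by auto
    also have "\<dots> = t powi wdeg [g] * (t powi wdeg x * nf_trace q P \<tau> (y @ (g # x)))"
      using Cons by (subst Cons.IH) auto
    finally show ?case
      using t by (simp add: wdeg_Cons[of g x] power_int_add mult.assoc)
  qed simp
qed

lemma nf_trace_in_twisted_traces:
  assumes "q \<noteq> 0" "t \<noteq> 0" "Zpow_recurrence q P t \<tau>"
  shows "nf_trace q P \<tau> \<in> twisted_traces q P t"
  using assms by (simp add: twisted_traces_iff nf_trace_def nf_trace_vanishes_on_ideal
      nf_trace_twisted_cyclic)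

function Zpow_solution :: "complex list \<Rightarrow> complex \<Rightarrow> complex \<Rightarrow> complex poly \<Rightarrow> nat \<Rightarrow> complex" where
  "Zpow_solution xs q t P m = (if m < degree P then xs ! m else
     - (\<Sum>i<degree P. rec_coeff q P t (m - degree P) i * Zpow_solution xs q t P (m - degree P + i))
       / rec_coeff q P t (m - degree P) (degree P))"
  by pat_completeness auto
termination by (relation "measure (\<lambda>(xs, q, t, P, m). m)") auto

declare Zpow_solution.simps [simp del]

lemma Zpow_solution_initial: "m < degree P \<Longrightarrow> Zpow_solution xs q t P m = xs ! m"
  by (simp add: Zpow_solution.simps)

lemma Zpow_solution_recurrence:
  assumes q: "q \<noteq> 0" and P: "P \<noteq> 0" and t: "\<forall>k. t \<noteq> inverse (q ^ (2 * k))"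
  shows "Zpow_recurrence q P t (Zpow_solution xs q t P)"
  unfolding Zpow_recurrence_def
proof
  fix j
  let ?n = "degree P" and ?\<tau> = "Zpow_solution xs q t P"
  have "rec_coeff q P t j ?n * ?\<tau> (j + ?n) = - (\<Sum>i<?n. rec_coeff q P t j i * ?\<tau> (j + i))"
    using Zpow_recurrence_lead_nonzero[OF q P t, of j]
    by (subst Zpow_solution.simps) (simp add: add.commute)
  then show "(\<Sum>i\<le>?n. rec_coeff q P t j i * ?\<tau> (j + i)) = 0"
    by (simp add: lessThan_Suc_atMost[symmetric] sum.lessThan_Suc)
qed

theorem proposition5p5:
  fixes q t :: complex and P :: "complex poly" and n :: nat
  assumes "0 < cmod q" and "cmod q < 1"
    and "degree P = n" and "n \<ge> 1"
    and "t \<noteq> 0"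
    and "\<forall>k::nat. t \<noteq> inverse (q ^ (2 * k))"
  shows "bij_betw (\<lambda>f. map (\<lambda>i. f (replicate i Z)) [0..<n])
           (twisted_traces q P t) {xs :: complex list. length xs = n}"
proof -
  have q: "q \<noteq> 0" using assms(1) by auto
  have P: "P \<noteq> 0" using assms(3,4) by auto
  let ?F = "\<lambda>f. map (\<lambda>i. f (replicate i Z)) [0..<n]"
  have "inj_on ?F (twisted_traces q P t)"
  proof (rule inj_onI)
    fix f1 f2 assume f1: "f1 \<in> twisted_traces q P t" and f2: "f2 \<in> twisted_traces q P t"
      and "?F f1 = ?F f2"
    then have "\<forall>i<degree P. f1 (replicate i Z) - f2 (replicate i Z) = 0"
      using assms(3) by (simp add: map_eq_conv)
    then have "f1 w - f2 w = 0" for w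
      using twisted_trace_eq_zero[OF twisted_traces_diff[OF f1 f2] q P assms(6)] by blast
    then show "f1 = f2" by auto
  qed
  moreover have "xs \<in> ?F ` twisted_traces q P t" if "length xs = n" for xs
  proof
    let ?\<tau> = "Zpow_solution xs q t P"
    show "nf_trace q P ?\<tau> \<in> twisted_traces q P t"
      by (rule nf_trace_in_twisted_traces[OF q assms(5) Zpow_solution_recurrence[OF q P assms(6)]])
    show "xs = ?F (nf_trace q P ?\<tau>)"
      using that assms(3) by (intro nth_equalityI) (simp_all add: nf_trace_Zpow Zpow_solution_initial)
  qed
  ultimately show ?thesis by (auto simp: bij_betw_def)
qed

end
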